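(* Let $G$ be a conference graph of order $v > 9$, i.e. a strongly regular graph with parameters $(v,k,\lambda,\mu) = \left(v, \frac{v-1}{2}, \frac{v-5}{4}, \frac{v-1}{4}\right)$. Then $G$ is optimistic: the distance matrix $D(G)$ has strictly more positive eigenvalues than negative eigenvalues, i.e. $n_{+}(G) > n_{-}(G)$.
   Context: For a connected graph $G$, the distance matrix $D(G)$ is the matrix indexed by vertices whose $(u,w)$ entry is the graph distance $d(u,w)$. $n_{+}(G)$ and $n_{-}(G)$ denote the number of strictly positive and strictly negative eigenvalues of $D(G)$ (counted with multiplicity). A graph is called optimistic if $n_{+}(G) > n_{-}(G)$. A strongly regular graph with parameters $(v,k,\lambda,\mu)$ is a $k$-regular graph on $v$ vertices in which every pair of adjacent vertices has exactly $\lambda$ common neighbours and every pair of distinct non-adjacent vertices has exactly $\mu$ common neighbours. *)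

theory Defs
  imports "Jordan_Normal_Form.Char_Poly"
begin

definition simple_graph :: "nat \<Rightarrow> (nat \<Rightarrow> nat \<Rightarrow> bool) \<Rightarrow> bool" where
  "simple_graph n E \<longleftrightarrow>
     (\<forall>u w. E u w \<longrightarrow> u < n \<and> w < n) \<and>
     (\<forall>u w. E u w \<longrightarrow> E w u) \<and>
     (\<forall>u. \<not> E u u)"

definition neighbours :: "nat \<Rightarrow> (nat \<Rightarrow> nat \<Rightarrow> bool) \<Rightarrow> nat \<Rightarrow> nat set" where
  "neighbours n E u = {w. w < n \<and> E u w}"

definition strongly_regular ::
  "nat \<Rightarrow> (nat \<Rightarrow> nat \<Rightarrow> bool) \<Rightarrow> nat \<Rightarrow> nat \<Rightarrow> nat \<Rightarrow> bool" where
  "strongly_regular n E k l m \<longleftrightarrow>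
     simple_graph n E \<and>
     (\<forall>u<n. card (neighbours n E u) = k) \<and>
     (\<forall>u<n. \<forall>w<n. E u w \<longrightarrow> card (neighbours n E u \<inter> neighbours n E w) = l) \<and>
     (\<forall>u<n. \<forall>w<n. u \<noteq> w \<and> \<not> E u w \<longrightarrow> card (neighbours n E u \<inter> neighbours n E w) = m)"

fun walk :: "(nat \<Rightarrow> nat \<Rightarrow> bool) \<Rightarrow> nat \<Rightarrow> nat \<Rightarrow> nat \<Rightarrow> bool" where
  "walk E 0 u w = (u = w)"
| "walk E (Suc len) u w = (\<exists>x. E u x \<and> walk E len x w)"

definition connected_graph :: "nat \<Rightarrow> (nat \<Rightarrow> nat \<Rightarrow> bool) \<Rightarrow> bool" where
  "connected_graph n E \<longleftrightarrow> (\<forall>u<n. \<forall>w<n. \<exists>len. walk E len u w)"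

text \<open>Graph distance: length of a shortest walk (meaningful for connected graphs).\<close>
definition graph_dist :: "(nat \<Rightarrow> nat \<Rightarrow> bool) \<Rightarrow> nat \<Rightarrow> nat \<Rightarrow> nat" where
  "graph_dist E u w = (LEAST len. walk E len u w)"

definition distance_matrix :: "nat \<Rightarrow> (nat \<Rightarrow> nat \<Rightarrow> bool) \<Rightarrow> real mat" where
  "distance_matrix n E = mat n n (\<lambda>(i, j). real (graph_dist E i j))"

definition n_plus :: "real mat \<Rightarrow> nat" where
  "n_plus A = (\<Sum>x\<in>{x. poly (char_poly A) x = 0 \<and> x > 0}. order x (char_poly A))"

definition n_minus :: "real mat \<Rightarrow> nat" where
  "n_minus A = (\<Sum>x\<in>{x. poly (char_poly A) x = 0 \<and> x < 0}. order x (char_poly A))"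

definition optimistic :: "nat \<Rightarrow> (nat \<Rightarrow> nat \<Rightarrow> bool) \<Rightarrow> bool" where
  "optimistic n E \<longleftrightarrow> n_plus (distance_matrix n E) > n_minus (distance_matrix n E)"

end

theory Submission
  imports Defs "Jordan_Normal_Form.Schur_Decomposition"
begin

text \<open>For a strongly regular graph with \<open>\<mu> > 0\<close> the distance matrix is \<open>D = 2J - 2I - A\<close>, and
  the identity \<open>A\<^sup>2 = kI + \<lambda>A + \<mu>(J - I - A)\<close> becomes a quadratic relation
  \<open>D\<^sup>2 = \<alpha>J + \<beta>D + \<gamma>I\<close> together with \<open>JD = \<rho>J\<close>. For a conference graph on \<open>v = 4t + 1\<close>
  vertices this reads \<open>D\<^sup>2 + 3D - (t - 2)I = (9t + 2)J\<close> and \<open>JD = 6tJ\<close>, so every eigenvalue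
  of \<open>D\<close> is \<open>6t\<close> or a root \<open>(-3 \<plusminus> \<surd>v)/2\<close> of \<open>x\<^sup>2 + 3x + 2 - t\<close>; in particular the
  spectrum is real. The traces \<open>tr D = 0\<close> and \<open>tr D\<^sup>2 = 10tv\<close> then force the negative root to
  have multiplicity exactly \<open>2t\<close>, and the remaining \<open>2t + 1\<close> eigenvalues \<open>6t\<close> and
  \<open>(\<surd>v - 3)/2\<close> are positive once \<open>v > 9\<close>.\<close>

section \<open>Eigenvalues of a matrix satisfying a quadratic relation\<close>

lemma smult_mat_mult_mat_vec:
  "A \<in> carrier_mat n m \<Longrightarrow> x \<in> carrier_vec m \<Longrightarrow> (c \<cdot>\<^sub>m A) *\<^sub>v x = c \<cdot>\<^sub>v (A *\<^sub>v x)"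
  by (rule eq_vecI) (auto simp: scalar_prod_def sum_distrib_left ac_simps)

lemma eigenvalue_quadratic_relation:
  fixes A J :: "'a::field mat"
  assumes A: "A \<in> carrier_mat n n" and J: "J \<in> carrier_mat n n"
    and JA: "J * A = \<rho> \<cdot>\<^sub>m J"
    and AA: "A * A = \<alpha> \<cdot>\<^sub>m J + \<beta> \<cdot>\<^sub>m A + \<gamma> \<cdot>\<^sub>m 1\<^sub>m n"
    and "eigenvalue A e"
  shows "e = \<rho> \<or> e^2 = \<beta> * e + \<gamma>"
proof -
  obtain x where x: "x \<in> carrier_vec n" "x \<noteq> 0\<^sub>v n" and Ax: "A *\<^sub>v x = e \<cdot>\<^sub>v x"
    using \<open>eigenvalue A e\<close> A unfolding eigenvalue_def eigenvector_def by auto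
  have "e \<cdot>\<^sub>v (J *\<^sub>v x) = J *\<^sub>v (A *\<^sub>v x)"
    unfolding Ax using J x by (simp add: mult_mat_vec)
  also have "\<dots> = \<rho> \<cdot>\<^sub>v (J *\<^sub>v x)"
    using A J x by (simp flip: assoc_mult_mat_vec add: JA smult_mat_mult_mat_vec)
  finally have eJx: "e \<cdot>\<^sub>v (J *\<^sub>v x) = \<rho> \<cdot>\<^sub>v (J *\<^sub>v x)" .
  show ?thesis
  proof (cases "e = \<rho>")
    case False
    have Jx: "J *\<^sub>v x = 0\<^sub>v n"
    proof (rule eq_vecI)
      fix i assume "i < dim_vec (0\<^sub>v n :: 'a vec)"
      moreover have "(e \<cdot>\<^sub>v (J *\<^sub>v x)) $ i = (\<rho> \<cdot>\<^sub>v (J *\<^sub>v x)) $ i"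
        by (simp only: eJx)
      ultimately show "(J *\<^sub>v x) $ i = 0\<^sub>v n $ i"
        using J False by simp
    qed (use J in simp)
    have "e^2 \<cdot>\<^sub>v x = (A * A) *\<^sub>v x"
      using A x Ax by (simp add: mult_mat_vec power2_eq_square smult_smult_assoc)
    also have "\<dots> = \<alpha> \<cdot>\<^sub>v (J *\<^sub>v x) + \<beta> \<cdot>\<^sub>v (A *\<^sub>v x) + \<gamma> \<cdot>\<^sub>v x"
      unfolding AA using A J x
      by (simp add: add_mult_distrib_mat_vec[of _ n n] smult_mat_mult_mat_vec
          smult_mat_mult_mat_vec[OF one_carrier_mat])
    also have "\<dots> = (\<beta> * e + \<gamma>) \<cdot>\<^sub>v x"
      unfolding Jx Ax by (rule eq_vecI) (use x in \<open>auto simp: algebra_simps\<close>)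
    finally have ex: "e^2 \<cdot>\<^sub>v x = (\<beta> * e + \<gamma>) \<cdot>\<^sub>v x" .
    obtain i where i: "i < n" "x $ i \<noteq> 0"
      using x by (metis eq_vecI carrier_vecD index_zero_vec)
    have "(e^2 \<cdot>\<^sub>v x) $ i = ((\<beta> * e + \<gamma>) \<cdot>\<^sub>v x) $ i"
      by (simp only: ex)
    then show ?thesis
      using i x by simp
  qed simp
qed

section \<open>Traces and characteristic polynomials with linear factors\<close>

definition trace :: "'a::comm_ring_1 mat \<Rightarrow> 'a" where
  "trace A = (\<Sum>i<dim_row A. A $$ (i, i))"

lemma trace_eq_sum_list_diag_mat: "trace A = sum_list (diag_mat A)"
  unfolding trace_def diag_mat_def
  by (simp add: sum_list_map_eq_sum_count lessThan_atLeast0 sum_set_upt_conv_sum_list_nat[symmetric])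

lemma trace_mult_comm:
  assumes "A \<in> carrier_mat n m" "B \<in> carrier_mat m n"
  shows "trace (A * B) = trace (B * A)"
proof -
  have "trace (A * B) = (\<Sum>i<n. \<Sum>j<m. A $$ (i, j) * B $$ (j, i))"
    unfolding trace_def using assms by (auto simp: scalar_prod_def lessThan_atLeast0)
  also have "\<dots> = (\<Sum>j<m. \<Sum>i<n. B $$ (j, i) * A $$ (i, j))"
    by (subst sum.swap) (simp add: mult.commute)
  also have "\<dots> = trace (B * A)"
    unfolding trace_def using assms by (auto simp: scalar_prod_def lessThan_atLeast0)
  finally show ?thesis .
qed

lemma trace_similar_mat_wit:
  assumes A: "A \<in> carrier_mat n n" and sim: "similar_mat_wit A B P Q"
  shows "trace A = trace B"
proof -
  note PBQ = similar_mat_witD2[OF A sim]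
  have "trace A = trace (P * (B * Q))"
    using PBQ by (metis assoc_mult_mat)
  also have "\<dots> = trace (B * Q * P)"
    using PBQ by (metis assoc_mult_mat mult_carrier_mat trace_mult_comm)
  also have "\<dots> = trace B"
    using PBQ by simp
  finally show ?thesis .
qed

lemma diag_mat_square_upper_triangular:
  fixes B :: "'a::comm_ring_1 mat"
  assumes B: "B \<in> carrier_mat n n" and ut: "upper_triangular B"
  shows "diag_mat (B * B) = map (\<lambda>b. b^2) (diag_mat B)"
proof -
  have "(B * B) $$ (i, i) = B $$ (i, i) ^ 2" if i: "i < n" for i
  proof -
    have "(B * B) $$ (i, i) = (\<Sum>j<n. B $$ (i, j) * B $$ (j, i))"
      using B i by (auto simp: scalar_prod_def lessThan_atLeast0)
    also have "\<dots> = (\<Sum>j<n. if j = i then B $$ (i, i) ^ 2 else 0)"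
      using B ut i by (intro sum.cong) (auto simp: upper_triangular_def power2_eq_square
          dest: linorder_neqE_nat)
    finally show ?thesis using i by simp
  qed
  then show ?thesis
    using B by (simp add: diag_mat_def)
qed

lemma trace_char_poly_linear_factors:
  fixes A :: "'a::conjugatable_ordered_field mat"
  assumes A: "A \<in> carrier_mat n n" and cp: "char_poly A = (\<Prod>e\<leftarrow>es. [:- e, 1:])"
  shows "trace A = sum_list es" "trace (A * A) = sum_list (map (\<lambda>e. e^2) es)"
proof -
  obtain B P Q where "schur_decomposition A es = (B, P, Q)"
    by (cases "schur_decomposition A es")
  from schur_decomposition[OF A cp this]
  have sim: "similar_mat_wit A B P Q" and ut: "upper_triangular B" and es: "diag_mat B = es"
    by auto
  have B: "B \<in> carrier_mat n n"
    using similar_mat_witD2[OF A sim] by simp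
  show "trace A = sum_list es"
    using trace_similar_mat_wit[OF A sim] es by (simp add: trace_eq_sum_list_diag_mat)
  have "similar_mat_wit (A ^\<^sub>m 2) (B ^\<^sub>m 2) P Q"
    by (rule similar_mat_wit_pow[OF sim])
  moreover have "A ^\<^sub>m 2 = A * A" "B ^\<^sub>m 2 = B * B"
    using A B by (simp_all add: numeral_2_eq_2)
  ultimately have "similar_mat_wit (A * A) (B * B) P Q" by simp
  then show "trace (A * A) = sum_list (map (\<lambda>e. e^2) es)"
    using trace_similar_mat_wit[of "A * A" n] A B ut es
    by (simp add: trace_eq_sum_list_diag_mat diag_mat_square_upper_triangular)
qed

lemma order_linear_factors:
  fixes es :: "'a::idom list"
  shows "Polynomial.order x (\<Prod>e\<leftarrow>es. [:- e, 1:]) = count_list es x"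
proof (induction es)
  case (Cons e es)
  have "[:- e, 1:] * (\<Prod>e\<leftarrow>es. [:- e, 1:]) \<noteq> 0"
    unfolding mult_eq_0_iff by (auto simp: prod_list_zero_iff)
  from order_mult[OF this] show ?case
    using Cons by (simp add: order_linear')
qed simp

lemma sum_order_linear_factors:
  fixes es :: "'a::idom list"
  defines "p \<equiv> \<Prod>e\<leftarrow>es. [:- e, 1:]"
  shows "(\<Sum>x\<in>{x. poly p x = 0 \<and> P x}. Polynomial.order x p) = length (filter P es)"
proof -
  have "{x. poly p x = 0 \<and> P x} = set (filter P es)"
    unfolding p_def by (auto simp: poly_prod_list prod_list_zero_iff)
  moreover have "count_list es x = count_list (filter P es) x" if "P x" for x
    using that by (induction es) auto
  ultimately show ?thesis
    unfolding order_linear_factors p_def by (simp add: sum_count_set)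
qed

lemma n_plus_n_minus_linear_factors:
  assumes "char_poly A = (\<Prod>r\<leftarrow>rs. [:- r, 1:])"
  shows "n_plus A = length (filter (\<lambda>r. r > 0) rs)" "n_minus A = length (filter (\<lambda>r. r < 0) rs)"
  unfolding n_plus_def n_minus_def assms sum_order_linear_factors by simp_all

lemma real_char_poly_linear_factors:
  fixes A :: "real mat"
  assumes A: "A \<in> carrier_mat n n"
    and real_ev: "\<And>e. eigenvalue (map_mat complex_of_real A) e \<Longrightarrow> e \<in> \<real>"
  obtains rs where "char_poly A = (\<Prod>r\<leftarrow>rs. [:- r, 1:])" "length rs = n"
proof -
  interpret of_real_poly: map_poly_inj_idom_hom "of_real :: real \<Rightarrow> complex" ..
  let ?C = "map_mat complex_of_real A"
  have C: "?C \<in> carrier_mat n n" using A by simp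
  obtain es where cp: "char_poly ?C = (\<Prod>e\<leftarrow>es. [:- e, 1:])" and len: "length es = n"
    using char_poly_factorized[OF C] by blast
  have real: "e \<in> \<real>" if "e \<in> set es" for e
    using that real_ev eigenvalue_root_char_poly[OF C]
    by (auto simp: cp poly_prod_list prod_list_zero_iff)
  have "map_poly complex_of_real (\<Prod>r\<leftarrow>map Re es. [:- r, 1:]) = (\<Prod>r\<leftarrow>map Re es. [:- of_real r, 1:])"
    unfolding of_real_poly.hom_prod_list map_map o_def by simp
  also have "\<dots> = char_poly ?C"
    using real by (simp add: cp o_def cong: map_cong)
  also have "\<dots> = map_poly of_real (char_poly A)"
    by (rule of_real_hom.char_poly_hom[OF A])
  finally have "char_poly A = (\<Prod>r\<leftarrow>map Re es. [:- r, 1:])"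
    by simp
  with that[of "map Re es"] len show ?thesis by simp
qed

section \<open>Distance matrices of strongly regular graphs\<close>

lemma graph_dist_refl: "graph_dist E u u = 0"
  unfolding graph_dist_def by (rule Least_equality) auto

lemma graph_dist_edge:
  assumes "E u w" "u \<noteq> w"
  shows "graph_dist E u w = 1"
  unfolding graph_dist_def
proof (rule Least_equality)
  show "walk E 1 u w" using assms by simp
next
  fix len assume "walk E len u w"
  with assms show "1 \<le> len" by (cases len) auto
qed

lemma graph_dist_common_neighbour:
  assumes "u \<noteq> w" "\<not> E u w" "E u x" "E x w"
  shows "graph_dist E u w = 2"
  unfolding graph_dist_def
proof (rule Least_equality)
  show "walk E 2 u w" using assms by (auto simp: numeral_2_eq_2)
next
  fix len assume "walk E len u w"
  with assms show "2 \<le> len" by (cases len; cases "len - 1") (auto simp: numeral_2_eq_2)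
qed

text \<open>The distance matrix over an arbitrary semiring, so that the same identities serve for the
  real distance matrix and for its complex copy.\<close>

definition dist_mat :: "nat \<Rightarrow> (nat \<Rightarrow> nat \<Rightarrow> bool) \<Rightarrow> 'a::semiring_1 mat" where
  "dist_mat n E = mat n n (\<lambda>(i, j). of_nat (graph_dist E i j))"

definition ones_mat :: "nat \<Rightarrow> 'a::one mat" where
  "ones_mat n = mat n n (\<lambda>_. 1)"

lemma dist_mat_carrier [simp]: "dist_mat n E \<in> carrier_mat n n"
  by (simp add: dist_mat_def)

lemma ones_mat_carrier [simp]: "ones_mat n \<in> carrier_mat n n"
  by (simp add: ones_mat_def)

lemma distance_matrix_eq_dist_mat: "distance_matrix n E = dist_mat n E"
  by (simp add: distance_matrix_def dist_mat_def)

lemma map_mat_of_real_dist_mat: "map_mat of_real (dist_mat n E) = dist_mat n E"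
  by (auto simp: dist_mat_def)

lemma trace_dist_mat: "trace (dist_mat n E) = 0"
  by (simp add: trace_def dist_mat_def graph_dist_refl)

locale strongly_regular_graph =
  fixes n :: nat and E :: "nat \<Rightarrow> nat \<Rightarrow> bool" and k l m :: nat
  assumes strongly_regular: "strongly_regular n E k l m"
begin

lemma edge_commute: "E u w \<longleftrightarrow> E w u"
  and edge_irrefl: "\<not> E u u"
  using strongly_regular unfolding strongly_regular_def simple_graph_def by blast+

lemma sum_adjacency_row:
  assumes "i < n"
  shows "(\<Sum>j<n. of_bool (E i j)) = (of_nat k :: 'a::semiring_1)"
proof -
  have "{..<n} \<inter> {j. E i j} = neighbours n E i"
    by (auto simp: neighbours_def)
  then show ?thesis
    using assms strongly_regular by (simp add: strongly_regular_def)
qed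

lemma sum_adjacency_square:
  assumes "i < n" "j < n"
  shows "(\<Sum>x<n. of_bool (E i x) * of_bool (E x j)) =
    (of_nat k * of_bool (i = j) + of_nat l * of_bool (E i j) + of_nat m * of_bool (i \<noteq> j \<and> \<not> E i j)
      :: 'a::semiring_1)"
proof -
  have "{..<n} \<inter> {x. E i x} \<inter> {x. E x j} = neighbours n E i \<inter> neighbours n E j"
    using edge_commute by (auto simp: neighbours_def)
  then have "(\<Sum>x<n. of_bool (E i x) * of_bool (E x j)) =
      (of_nat (card (neighbours n E i \<inter> neighbours n E j)) :: 'a)"
    by simp
  then show ?thesis
    using assms strongly_regular edge_irrefl by (auto simp: strongly_regular_def)
qed

lemma graph_dist_eq:
  assumes "0 < m" "i < n" "j < n"
  shows "graph_dist E i j = (if i = j then 0 else if E i j then 1 else 2)"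
proof -
  have "\<exists>x. E i x \<and> E x j" if "i \<noteq> j" "\<not> E i j"
  proof -
    have "card (neighbours n E i \<inter> neighbours n E j) = m"
      using strongly_regular assms that by (simp add: strongly_regular_def)
    with \<open>0 < m\<close> obtain x where "x \<in> neighbours n E i \<inter> neighbours n E j"
      by (metis card.empty ex_in_conv less_irrefl)
    then show ?thesis
      using edge_commute by (auto simp: neighbours_def)
  qed
  then show ?thesis
    by (auto simp: graph_dist_refl graph_dist_edge intro: graph_dist_common_neighbour)
qed

lemma of_nat_graph_dist:
  assumes "0 < m" "i < n" "j < n"
  shows "(of_nat (graph_dist E i j) :: 'a::comm_ring_1) = 2 - 2 * of_bool (i = j) - of_bool (E i j)"
  using assms by (cases "i = j") (simp_all add: graph_dist_eq edge_irrefl)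

lemma sum_dist_col:
  assumes "0 < m" "j < n"
  shows "(\<Sum>x<n. of_nat (graph_dist E x j)) = 2 * of_nat n - 2 - (of_nat k :: 'a::comm_ring_1)"
proof -
  have "(\<Sum>x<n. of_nat (graph_dist E x j)) = (\<Sum>x<n. 2 - 2 * of_bool (x = j) - of_bool (E j x) :: 'a)"
    using assms edge_commute by (simp add: of_nat_graph_dist)
  also have "\<dots> = 2 * of_nat n - 2 - of_nat k"
    using assms sum_adjacency_row[of j] by (simp add: sum_subtractf sum_distrib_left)
  finally show ?thesis .
qed

lemma sum_dist_dist:
  assumes "0 < m" "i < n" "j < n"
  shows "(\<Sum>x<n. of_nat (graph_dist E i x) * of_nat (graph_dist E x j)) =
    (4 * of_nat n - 4 * of_nat k + 2 * of_nat l - of_nat m)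
    + (of_nat m - of_nat l - 4) * of_nat (graph_dist E i j)
    + (of_nat k + of_nat m - 2 * of_nat l - 4) * (of_bool (i = j) :: 'a::comm_ring_1)"
proof -
  let ?d = "\<lambda>x y. of_nat (graph_dist E x y) :: 'a"
  let ?a = "\<lambda>x y. of_bool (E x y) :: 'a"
  have delta: "(\<Sum>x<n. f x * of_bool (x = j)) = f j" "(\<Sum>x<n. of_bool (i = x) * f x) = f i"
    for f :: "nat \<Rightarrow> 'a"
    using assms by simp_all
  have "(\<Sum>x<n. ?a i x * ?d x j) = (\<Sum>x<n. 2 * ?a i x - 2 * (?a i x * of_bool (x = j)) - ?a i x * ?a x j)"
    using assms by (intro sum.cong refl) (simp add: of_nat_graph_dist algebra_simps)
  also have "\<dots> = 2 * (\<Sum>x<n. ?a i x) - 2 * (\<Sum>x<n. ?a i x * of_bool (x = j)) - (\<Sum>x<n. ?a i x * ?a x j)"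
    by (simp only: sum_subtractf sum_distrib_left)
  finally have adj_dist: "(\<Sum>x<n. ?a i x * ?d x j) = 2 * of_nat k - 2 * ?a i j - (\<Sum>x<n. ?a i x * ?a x j)"
    by (simp only: sum_adjacency_row[OF assms(2)] delta)
  have "(\<Sum>x<n. ?d i x * ?d x j) = (\<Sum>x<n. 2 * ?d x j - 2 * (of_bool (i = x) * ?d x j) - ?a i x * ?d x j)"
    using assms by (intro sum.cong refl) (simp add: of_nat_graph_dist algebra_simps)
  also have "\<dots> = 2 * (\<Sum>x<n. ?d x j) - 2 * (\<Sum>x<n. of_bool (i = x) * ?d x j) - (\<Sum>x<n. ?a i x * ?d x j)"
    by (simp only: sum_subtractf sum_distrib_left)
  also have "\<dots> = 2 * (2 * of_nat n - 2 - of_nat k) - 2 * ?d i j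
      - (2 * of_nat k - 2 * ?a i j - (of_nat k * of_bool (i = j) + of_nat l * ?a i j + of_nat m * of_bool (i \<noteq> j \<and> \<not> E i j)))"
    by (simp only: sum_dist_col[OF assms(1,3)] delta adj_dist sum_adjacency_square[OF assms(2,3)])
  finally show ?thesis
    using assms by (cases "i = j"; cases "E i j") (simp_all add: of_nat_graph_dist edge_irrefl algebra_simps)
qed

lemma ones_mult_dist_mat:
  assumes "0 < m"
  shows "ones_mat n * dist_mat n E = (2 * of_nat n - 2 - of_nat k) \<cdot>\<^sub>m (ones_mat n :: 'a::comm_ring_1 mat)"
  using assms
  by (intro eq_matI) (auto simp: ones_mat_def dist_mat_def scalar_prod_def atLeast0LessThan sum_dist_col)

lemma dist_mat_square:
  assumes "0 < m"
  shows "dist_mat n E * dist_mat n E =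
    (4 * of_nat n - 4 * of_nat k + 2 * of_nat l - of_nat m) \<cdot>\<^sub>m ones_mat n
    + (of_nat m - of_nat l - 4) \<cdot>\<^sub>m dist_mat n E
    + (of_nat k + of_nat m - 2 * of_nat l - 4) \<cdot>\<^sub>m (1\<^sub>m n :: 'a::comm_ring_1 mat)"
  using assms
  by (intro eq_matI) (auto simp: ones_mat_def dist_mat_def scalar_prod_def atLeast0LessThan sum_dist_dist)

lemma trace_dist_mat_square:
  assumes "0 < m"
  shows "trace (dist_mat n E * dist_mat n E) = of_nat n * (4 * of_nat n - 3 * of_nat k - (4 :: 'a::comm_ring_1))"
proof -
  have "trace (dist_mat n E * dist_mat n E) = (\<Sum>i<n. (dist_mat n E * dist_mat n E) $$ (i, i) :: 'a)"
    by (simp add: trace_def dist_mat_def)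
  also have "\<dots> = (\<Sum>i<n. 4 * of_nat n - 3 * of_nat k - 4)"
    using assms
    by (intro sum.cong refl) (simp add: dist_mat_def scalar_prod_def atLeast0LessThan sum_dist_dist graph_dist_refl)
  finally show ?thesis
    by simp
qed

end

section \<open>Conference graphs\<close>

locale conference_graph = strongly_regular_graph n E "2 * t" "t - 1" t for n E t +
  assumes order: "n = 4 * t + 1" and t_pos: "0 < t"
begin

lemma dist_mat_eigenvalue:
  fixes e :: "'a::field"
  assumes "eigenvalue (dist_mat n E) e"
  shows "e = 6 * of_nat t \<or> e^2 = -3 * e + (of_nat t - 2)"
  using eigenvalue_quadratic_relation[OF dist_mat_carrier ones_mat_carrier
      ones_mult_dist_mat[OF t_pos] dist_mat_square[OF t_pos] assms] order t_pos
  by (simp add: of_nat_diff algebra_simps)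

end

lemma sum_list_product_vanishing:
  fixes xs :: "'a::comm_ring_1 list"
  assumes "set xs \<subseteq> {a, b, c}"
  shows "(\<Sum>x\<leftarrow>xs. (x - a) * (x - c)) = of_nat (count_list xs b) * ((b - a) * (b - c))"
  using assms by (induction xs) (auto simp: algebra_simps)

lemma conference_quadratic_roots:
  fixes e :: "'a::real_field" and t :: nat
  defines "w \<equiv> sqrt (4 * t + 1)"
  assumes "e^2 = -3 * e + (of_nat t - 2)"
  shows "e = of_real ((-3 - w) / 2) \<or> e = of_real ((w - 3) / 2)"
proof -
  define b c where "b = (-3 - w) / 2" and "c = (w - 3) / 2"
  have b_plus_c: "b + c = -3"
    unfolding b_def c_def by (simp add: field_simps)
  have "b * c = (9 - w^2) / 4"
    unfolding b_def c_def by (simp add: field_simps power2_eq_square)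
  also have "w^2 = 4 * t + 1"
    unfolding w_def by simp
  finally have bc: "b * c = 2 - real t"
    by simp
  have "(e - of_real b) * (e - of_real c) = e^2 - of_real (b + c) * e + of_real (b * c)"
    by (simp add: algebra_simps power2_eq_square)
  also have "\<dots> = 0"
    using assms(2) unfolding bc b_plus_c by simp
  finally show ?thesis
    unfolding b_def c_def by simp
qed

lemma conference_negative_multiplicity:
  fixes rs :: "real list" and t :: nat
  defines "w \<equiv> sqrt (4 * t + 1)"
  assumes roots: "set rs \<subseteq> {6 * t, (-3 - w) / 2, (w - 3) / 2}" and len: "length rs = 4 * t + 1"
    and sum1: "sum_list rs = 0" and sum2: "(\<Sum>r\<leftarrow>rs. r^2) = (4 * t + 1) * (10 * t)"
  shows "count_list rs ((-3 - w) / 2) = 2 * t"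
proof -
  define a b c where "a = 6 * real t" and "b = (-3 - w) / 2" and "c = (w - 3) / 2"
  have w2: "w^2 = 4 * t + 1"
    unfolding w_def by simp
  have w_pos: "0 < w"
    unfolding w_def by simp
  have "(b - a) * (b - c) = (3 * w + w^2 + 12 * t * w) / 2"
    unfolding a_def b_def c_def by (simp add: field_simps power2_eq_square)
  also have "\<dots> = (4 * t + 1) * (1 + 3 * w) / 2"
    unfolding w2 by (simp add: field_simps)
  finally have ba_bc: "(b - a) * (b - c) = (4 * t + 1) * (1 + 3 * w) / 2" .
  have "count_list rs b * ((b - a) * (b - c)) = (\<Sum>r\<leftarrow>rs. (r - a) * (r - c))"
    using roots sum_list_product_vanishing[of rs a b c] unfolding a_def b_def c_def by simp
  also have "\<dots> = (\<Sum>r\<leftarrow>rs. r^2) - (a + c) * sum_list rs + a * c * length rs"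
    by (induction rs) (simp_all add: algebra_simps power2_eq_square)
  also have "\<dots> = (4 * t + 1) * (1 + 3 * w) * t"
    unfolding sum1 sum2 len a_def c_def by (simp add: field_simps)
  finally have "real (count_list rs b) * ((4 * t + 1) * (1 + 3 * w)) = real (2 * t) * ((4 * t + 1) * (1 + 3 * w))"
    unfolding ba_bc by (simp add: field_simps)
  then have "real (count_list rs b) = real (2 * t)"
    using w_pos by auto
  then show ?thesis
    unfolding b_def by (simp only: of_nat_eq_iff)
qed

context conference_graph
begin

lemma optimistic:
  assumes "3 \<le> t"
  shows "optimistic n E"
proof -
  define w where "w = sqrt (4 * t + 1)"
  define a b c where "a = 6 * real t" and "b = (-3 - w) / 2" and "c = (w - 3) / 2"
  let ?D = "distance_matrix n E"
  have D: "?D \<in> carrier_mat n n"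
    by (simp add: distance_matrix_eq_dist_mat)
  have "e \<in> \<real>" if "eigenvalue (map_mat complex_of_real ?D) e" for e
  proof -
    have "e = 6 * of_nat t \<or> e^2 = -3 * e + (of_nat t - 2)"
      using that by (intro dist_mat_eigenvalue) (simp add: distance_matrix_eq_dist_mat map_mat_of_real_dist_mat)
    then show ?thesis
      using conference_quadratic_roots[of e t] Reals_of_real Reals_of_nat by (metis Reals_mult Reals_numeral)
  qed
  then obtain rs where cp: "char_poly ?D = (\<Prod>r\<leftarrow>rs. [:- r, 1:])" and len: "length rs = n"
    using real_char_poly_linear_factors[OF D] by blast
  have roots: "set rs \<subseteq> {a, b, c}"
  proof
    fix r assume "r \<in> set rs"
    then have "eigenvalue (dist_mat n E) r"
      using eigenvalue_root_char_poly[OF D] cp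
      by (auto simp: distance_matrix_eq_dist_mat poly_prod_list prod_list_zero_iff)
    then show "r \<in> {a, b, c}"
      using dist_mat_eigenvalue[of r] conference_quadratic_roots[of r t]
      unfolding a_def b_def c_def w_def by auto
  qed
  have "trace (?D * ?D) = (4 * t + 1) * (10 * t)"
    using trace_dist_mat_square[OF t_pos, where 'a = real] order
    by (simp add: distance_matrix_eq_dist_mat algebra_simps)
  then have "sum_list rs = 0" "(\<Sum>r\<leftarrow>rs. r^2) = (4 * t + 1) * (10 * t)"
    using trace_char_poly_linear_factors[OF D cp] by (simp_all add: distance_matrix_eq_dist_mat trace_dist_mat)
  then have count_b: "count_list rs b = 2 * t"
    using conference_negative_multiplicity[of rs t] roots len order
    unfolding a_def b_def c_def w_def by simp
  have "3 < w"
    using assms unfolding w_def by (simp add: real_less_rsqrt)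
  \<comment> \<open>For \<open>t = 2\<close>, i.e. \<open>v = 9\<close>, the root \<open>c\<close> would vanish.\<close>
  then have "0 < a" "b < 0" "0 < c"
    using assms unfolding a_def b_def c_def by simp_all
  then have "filter (\<lambda>r. r < 0) rs = filter ((=) b) rs" "filter (\<lambda>r. \<not> 0 < r) rs = filter ((=) b) rs"
    using roots by (auto intro!: filter_cong)
  then have "n_minus ?D = count_list rs b" "n_plus ?D + count_list rs b = n"
    using n_plus_n_minus_linear_factors[OF cp] sum_length_filter_compl[of "\<lambda>r. 0 < r" rs] len
    by (simp_all add: count_list_eq_length_filter)
  then show ?thesis
    unfolding optimistic_def using count_b order by simp
qed

end

theorem theorem1:
  fixes v k l m :: nat and E :: "nat \<Rightarrow> nat \<Rightarrow> bool"
  assumes "v > 9"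
    and "strongly_regular v E k l m"
    and "2 * k = v - 1" and "4 * l = v - 5" and "4 * m = v - 1"
  shows "optimistic v E"
proof -
  have "k = 2 * m" "l = m - 1" "v = 4 * m + 1" "3 \<le> m"
    using assms(1,3-5) by linarith+
  then interpret conference_graph v E m
    using assms(2) by unfold_locales simp_all
  show ?thesis
    using \<open>3 \<le> m\<close> by (rule optimistic)
qed

end
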